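(* Let $f(z)=\sum_{k\ge0}f_kz^k$ be holomorphic on the open unit disk, $0<r<1$, and let $N(n)$ be an increasing sequence of integers with $N(n)/n\to\infty$ such that for each $n$ there are $P_n\in\mathcal P_n$ and $Q_n\in\mathcal P_1$, $Q_n\neq0$, with $Q_nf-P_n$ having at least $N(n)$ zeros in $\overline\Delta_r$, normalized so that $Q_n(z)=\alpha_nz-1$ with $\alpha_n\in\mathbb C$ or $Q_n(z)=z$ (written $\alpha_n=\infty$, with $|\infty|=\infty$). Suppose $f$ is holomorphic on $\Delta_s=\{|z|<s\}$ for some $1\le s\le\infty$ (with $\Delta_\infty=\mathbb C$, $1/\infty=0$). If $\liminf_{n\to\infty}|\alpha_n|>1/s$, then $f$ is a polynomial.
   Context: $\mathcal P_n$ is the space of complex polynomials of degree at most $n$; zeros are counted with multiplicity. *)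

theory Defs
  imports "HOL-Complex_Analysis.Complex_Analysis" "HOL-Computational_Algebra.Polynomial"
begin

definition zero_count :: "(complex \<Rightarrow> complex) \<Rightarrow> complex set \<Rightarrow> enat" where
  "zero_count g K =
     (if finite {z\<in>K. g z = 0}
      then enat (\<Sum>z\<in>{z\<in>K. g z = 0}. nat (zorder g z))
      else \<infinity>)"

text \<open>Normalized denominators: Some a encodes Q(z) = a z - 1, None (alpha = infinity) encodes Q(z) = z.\<close>
fun Qnorm :: "complex option \<Rightarrow> complex \<Rightarrow> complex" where
  "Qnorm None z = z"
| "Qnorm (Some a) z = a * z - 1"

fun abs_alpha :: "complex option \<Rightarrow> ereal" where
  "abs_alpha None = \<infinity>"
| "abs_alpha (Some a) = ereal (norm a)"

definition disk :: "ereal \<Rightarrow> complex set" where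
  "disk s = {z. ereal (norm z) < s}"

end

(* Suppose f is not a polynomial. Fix a with 1/s < a < liminf |alpha_n| and radii
   r < R < rho < s with 1/a < rho. As f has infinitely many nonzero Taylor coefficients f_k
   and |f_k| rho^k -> 0, there are arbitrarily large n for which the term f_n z^n dominates
   all later terms on |z| = rho. Fix such an n with |alpha_n| > a and let G = Q_n f - P_n.
   On |z| <= R, G differs from a polynomial of degree n by O(|f_n| |z|^n), so the Cauchy
   estimates for that polynomial bound max |G| on |z| = R by (n+1) (R/r)^n times max |G| on
   |z| = r, up to O(n |f_n| R^n). Dividing the N(n) zeros of G in |z| <= r out by Blaschke
   factors of the disk of radius R shrinks the maximum on |z| = r by q^N(n), where
   q = 2rR/(R^2+r^2) < 1; hence max |G| on |z| = r is O(n q^N(n) |f_n| R^n). On the other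
   hand the (n+1)-st Taylor coefficient of G is alpha_n f_n - f_(n+1) (or f_n if alpha_n is
   infinite), of modulus at least |alpha_n| |f_n| (1 - 1/(a rho)), so that maximum is at least
   this times r^(n+1). Comparing the two gives 1 <= C n q^N(n) (R/r)^n, which fails for large
   n because N(n)/n -> infinity. *)

theory Submission
  imports Defs "HOL-Real_Asymp.Real_Asymp"
begin

(* The maximum of |R (z - a) / (R^2 - cnj a z)| over |a|, |z| <= r. *)
definition blaschke_bound :: "real \<Rightarrow> real \<Rightarrow> real" where
  "blaschke_bound r R = 2 * r * R / (R\<^sup>2 + r\<^sup>2)"

lemma blaschke_bound_nonneg: "0 \<le> r \<Longrightarrow> 0 \<le> R \<Longrightarrow> 0 \<le> blaschke_bound r R"
  by (simp add: blaschke_bound_def)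

lemma blaschke_bound_less_1:
  assumes "0 \<le> r" "r < R"
  shows "blaschke_bound r R < 1"
proof -
  have "0 < (R - r)\<^sup>2" using assms by simp
  hence "2 * r * R < R\<^sup>2 + r\<^sup>2" by (simp add: power2_eq_square algebra_simps)
  moreover have "0 < R\<^sup>2 + r\<^sup>2" using assms by (simp add: add_pos_nonneg)
  ultimately show ?thesis by (simp add: blaschke_bound_def)
qed

lemma blaschke_identity:
  fixes a z :: complex and R :: real
  shows "(norm (of_real (R\<^sup>2) - cnj a * z))\<^sup>2 - R\<^sup>2 * (norm (z - a))\<^sup>2
         = (R\<^sup>2 - (norm a)\<^sup>2) * (R\<^sup>2 - (norm z)\<^sup>2)"
proof -
  have "complex_of_real ((norm (of_real (R\<^sup>2) - cnj a * z))\<^sup>2 - R\<^sup>2 * (norm (z - a))\<^sup>2)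
      = complex_of_real ((R\<^sup>2 - (norm a)\<^sup>2) * (R\<^sup>2 - (norm z)\<^sup>2))"
    by (simp only: of_real_diff of_real_mult complex_norm_square)
       (simp add: algebra_simps power2_eq_square)
  thus ?thesis using of_real_eq_iff by blast
qed

lemma norm_blaschke_denominator_ge:
  fixes a z :: complex
  assumes "norm a \<le> r" "norm z \<le> r"
  shows "R\<^sup>2 - r\<^sup>2 \<le> norm (of_real (R\<^sup>2) - cnj a * z)"
proof -
  have "norm (cnj a * z) \<le> r\<^sup>2"
    using mult_mono'[OF assms norm_ge_zero norm_ge_zero] by (simp add: norm_mult power2_eq_square)
  thus ?thesis using norm_triangle_ineq2[of "of_real (R\<^sup>2)" "cnj a * z"] by (simp add: norm_power)
qed

lemma blaschke_factor_bound:
  fixes a z :: complex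
  assumes "0 \<le> r" "r < R" "norm a \<le> r" "norm z \<le> r"
  shows "R * norm (z - a) \<le> blaschke_bound r R * norm (of_real (R\<^sup>2) - cnj a * z)"
proof -
  define D where "D = norm (of_real (R\<^sup>2) - cnj a * z)"
  have "norm (cnj a * z) \<le> r\<^sup>2"
    using mult_mono'[OF assms(3,4) norm_ge_zero norm_ge_zero]
    by (simp add: norm_mult power2_eq_square)
  hence "D \<le> R\<^sup>2 + r\<^sup>2"
    using norm_triangle_ineq4[of "of_real (R\<^sup>2)" "cnj a * z"] by (simp add: D_def norm_power)
  moreover have "0 \<le> D" by (simp add: D_def norm_power)
  ultimately have D2: "D\<^sup>2 \<le> (R\<^sup>2 + r\<^sup>2)\<^sup>2" by (rule power_mono)
  have pos: "0 < R\<^sup>2 + r\<^sup>2" using assms by (simp add: add_pos_nonneg)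
  have "(norm a)\<^sup>2 \<le> r\<^sup>2" "(norm z)\<^sup>2 \<le> r\<^sup>2" "r\<^sup>2 \<le> R\<^sup>2"
    using assms by (auto intro: power_mono)
  hence "(R\<^sup>2 - r\<^sup>2) * (R\<^sup>2 - r\<^sup>2) \<le> (R\<^sup>2 - (norm a)\<^sup>2) * (R\<^sup>2 - (norm z)\<^sup>2)"
    by (intro mult_mono) auto
  hence "R\<^sup>2 * (norm (z - a))\<^sup>2 \<le> D\<^sup>2 - (R\<^sup>2 - r\<^sup>2)\<^sup>2"
    using blaschke_identity[of R a z] by (simp add: D_def power2_eq_square)
  also have "\<dots> \<le> D\<^sup>2 - D\<^sup>2 * (R\<^sup>2 - r\<^sup>2)\<^sup>2 / (R\<^sup>2 + r\<^sup>2)\<^sup>2"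
    using mult_right_mono[OF D2, of "(R\<^sup>2 - r\<^sup>2)\<^sup>2"] pos by (simp add: divide_le_eq mult.commute)
  also have "\<dots> = D\<^sup>2 * ((R\<^sup>2 + r\<^sup>2)\<^sup>2 - (R\<^sup>2 - r\<^sup>2)\<^sup>2) / (R\<^sup>2 + r\<^sup>2)\<^sup>2"
    using pos by (simp add: right_diff_distrib diff_divide_distrib) (use assms(1,2) in linarith)
  also have "(R\<^sup>2 + r\<^sup>2)\<^sup>2 - (R\<^sup>2 - r\<^sup>2)\<^sup>2 = (2 * r * R)\<^sup>2"
    by (simp add: power2_eq_square algebra_simps)
  also have "D\<^sup>2 * (2 * r * R)\<^sup>2 / (R\<^sup>2 + r\<^sup>2)\<^sup>2 = (blaschke_bound r R * D)\<^sup>2"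
    by (simp add: blaschke_bound_def power_divide power_mult_distrib)
  finally have "(R * norm (z - a))\<^sup>2 \<le> (blaschke_bound r R * D)\<^sup>2"
    by (simp add: power_mult_distrib)
  moreover have "0 \<le> blaschke_bound r R * D"
    using assms \<open>0 \<le> D\<close> by (simp add: blaschke_bound_nonneg)
  ultimately show ?thesis
    unfolding D_def by (rule power2_le_imp_le)
qed

lemma zorder_linear: "zorder (\<lambda>w. w - a) z = (if z = a then 1 else 0)"
proof (cases "z = a")
  case True
  have "zorder (\<lambda>w. w - a) a = 1"
    by (rule zorder_eqI[where S=UNIV and g="\<lambda>_. 1"]) auto
  thus ?thesis using True by simp
next
  case False
  thus ?thesis by (subst zorder_eq_0I) (auto intro!: analytic_intros)
qed

lemma zero_count_pos_imp_zero:
  assumes "zero_count g K > 0"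
  obtains a where "a \<in> K" "g a = 0"
proof -
  have "{w\<in>K. g w = 0} \<noteq> {}"
  proof
    assume none: "{w\<in>K. g w = 0} = {}"
    have "zero_count g K = 0" unfolding zero_count_def none by (simp add: zero_enat_def)
    with assms show False by simp
  qed
  thus ?thesis using that by blast
qed

lemma eventually_nonzero_holomorphic:
  assumes "g holomorphic_on S" "open S" "connected S" "w \<in> S" "\<beta> \<in> S" "g \<beta> \<noteq> 0"
  shows "\<forall>\<^sub>F x in at w. g x \<noteq> 0"
  using non_zero_neighbour_alt[OF assms] by (auto elim: eventually_mono)

lemma zero_count_mult_nonvanishing:
  assumes g: "g holomorphic_on S" "open S" "connected S" "\<beta> \<in> S" "g \<beta> \<noteq> 0"
    and c: "c holomorphic_on S" "\<And>w. w \<in> K \<Longrightarrow> c w \<noteq> 0"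
    and K: "K \<subseteq> S"
  shows "zero_count (\<lambda>w. g w * c w) K = zero_count g K"
proof -
  have zeros: "{w\<in>K. g w * c w = 0} = {w\<in>K. g w = 0}" using c(2) by auto
  have "zorder (\<lambda>w. g w * c w) w = zorder g w" if "w \<in> K" for w
  proof -
    have an: "g analytic_on {w}" "c analytic_on {w}"
      using g(1,2) c(1) K that by (auto simp: analytic_at)
    have "\<forall>\<^sub>F x in at w. c x \<noteq> 0"
      by (rule analytic_at_neq_imp_eventually_neq[OF an(2) c(2)[OF that]])
    moreover have "\<forall>\<^sub>F x in at w. g x \<noteq> 0"
      using eventually_nonzero_holomorphic[OF g(1-3) _ g(4,5)] K that by blast
    ultimately have "\<forall>\<^sub>F x in at w. g x * c x \<noteq> 0"
      by eventually_elim simp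
    hence "zorder (\<lambda>w. g w * c w) w = zorder g w + zorder c w"
      by (rule zorder_times_analytic[OF an])
    thus ?thesis using zorder_eq_0I[OF an(2) c(2)[OF that]] by simp
  qed
  thus ?thesis unfolding zero_count_def zeros by (auto intro: sum.cong)
qed

lemma zero_count_linear_factor:
  assumes g: "g holomorphic_on S" "open S" "connected S" "\<beta> \<in> S" "g \<beta> \<noteq> 0"
    and K: "K \<subseteq> S" "a \<in> K"
  shows "zero_count (\<lambda>w. (w - a) * g w) K = eSuc (zero_count g K)"
proof -
  define Z where "Z = {w\<in>K. g w = 0}"
  have zeros: "{w\<in>K. (w - a) * g w = 0} = insert a Z" using K(2) by (auto simp: Z_def)
  have nat_zorder_g: "nat (zorder g w) = 0" if "w \<in> S" "g w \<noteq> 0" for w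
  proof -
    have "g analytic_on {w}" using g(1,2) that(1) analytic_at by blast
    thus ?thesis using zorder_eq_0I that(2) by simp
  qed
  have zorder_prod:
    "nat (zorder (\<lambda>w. (w - a) * g w) w) = (if w = a then 1 else 0) + nat (zorder g w)"
    if "w \<in> S" for w
  proof -
    have an: "(\<lambda>w. w - a) analytic_on {w}" "g analytic_on {w}"
      by (intro analytic_intros) (use g(1,2) that analytic_at in blast)
    have ev: "\<forall>\<^sub>F x in at w. g x \<noteq> 0"
      by (rule eventually_nonzero_holomorphic[OF g(1-3) that g(4,5)])
    have "\<forall>\<^sub>F x in at w. (x - a) * g x \<noteq> 0"
      using ev eventually_neq_at_within[of a w UNIV] by eventually_elim simp
    hence "zorder (\<lambda>w. (w - a) * g w) w = zorder (\<lambda>w. w - a) w + zorder g w"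
      by (rule zorder_times_analytic[OF an])
    moreover have "zorder g w \<ge> 0"
      by (rule zorder_ge_0[OF an(2) eventually_frequently[OF _ ev]]) simp
    ultimately show ?thesis by (simp add: zorder_linear nat_add_distrib)
  qed
  have sum_insert: "(\<Sum>w\<in>insert a Z. nat (zorder g w)) = (\<Sum>w\<in>Z. nat (zorder g w))" if "finite Z"
  proof (cases "a \<in> Z")
    case False
    thus ?thesis using that nat_zorder_g[of a] K by (auto simp: Z_def)
  qed (simp add: insert_absorb)
  show ?thesis
  proof (cases "finite Z")
    case True
    have "(\<Sum>w\<in>insert a Z. nat (zorder (\<lambda>w. (w - a) * g w) w))
        = (\<Sum>w\<in>insert a Z. (if w = a then 1 else 0) + nat (zorder g w))"
      using K by (intro sum.cong refl zorder_prod) (auto simp: Z_def)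
    also have "\<dots> = 1 + (\<Sum>w\<in>Z. nat (zorder g w))"
      using True by (simp add: sum.distrib sum_insert)
    finally show ?thesis
      using True unfolding zero_count_def zeros Z_def[symmetric] by (simp add: eSuc_enat)
  next
    case False
    thus ?thesis unfolding zero_count_def zeros Z_def[symmetric] by simp
  qed
qed

lemma divide_blaschke_factor:
  fixes G :: "complex \<Rightarrow> complex"
  assumes hol: "G holomorphic_on ball 0 R1" and r: "0 \<le> r" "r < R" "R < R1"
    and a: "norm a \<le> r" "G a = 0" and nz: "\<beta> \<in> ball 0 R1" "G \<beta> \<noteq> 0"
  obtains H where "H holomorphic_on ball 0 R1"
    and "eSuc (zero_count H (cball 0 r)) = zero_count G (cball 0 r)"
    and "\<And>w. norm w = R \<Longrightarrow> norm (H w) = norm (G w)"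
    and "\<And>z. norm z \<le> r \<Longrightarrow> norm (G z) \<le> blaschke_bound r R * norm (H z)"
proof -
  define G1 where "G1 = (\<lambda>z. if z = a then deriv G a else (G z - G a) / (z - a))"
  have holG1: "G1 holomorphic_on ball 0 R1"
    unfolding G1_def by (rule pole_lemma[OF hol]) (use a r in auto)
  have Gfac: "G w = (w - a) * G1 w" for w
    using a by (auto simp: G1_def)
  \<comment> \<open>\<open>H = G / B\<close> for the Blaschke factor \<open>B w = R (w - a) / (R\<^sup>2 - cnj a w)\<close>,
    which has modulus 1 on the circle \<open>|w| = R\<close>\<close>
  define c where "c = (\<lambda>w. (of_real (R\<^sup>2) - cnj a * w) / of_real R)"
  define H where "H = (\<lambda>w. G1 w * c w)"
  have R: "0 < R" "r < R1" using r by auto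
  have cball_sub: "cball 0 r \<subseteq> ball (0::complex) R1" using r by auto
  have c_nz: "c w \<noteq> 0" if "w \<in> cball 0 r" for w
  proof -
    have "0 < R\<^sup>2 - r\<^sup>2" using r by (simp add: power_strict_mono)
    also have "\<dots> \<le> norm (of_real (R\<^sup>2) - cnj a * w)"
      using norm_blaschke_denominator_ge[OF a(1)] that by simp
    finally show ?thesis using R by (auto simp: c_def)
  qed
  have G1_nz: "G1 \<beta> \<noteq> 0" using nz Gfac by auto
  show ?thesis
  proof (rule that)
    show "H holomorphic_on ball 0 R1"
      unfolding H_def c_def using R(1) by (intro holomorphic_intros holG1) auto
    have "c holomorphic_on ball 0 R1"
      unfolding c_def using R(1) by (intro holomorphic_intros) auto
    hence "zero_count H (cball 0 r) = zero_count G1 (cball 0 r)"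
      unfolding H_def
      by (rule zero_count_mult_nonvanishing[OF holG1 open_ball connected_ball nz(1) G1_nz _ c_nz
            cball_sub])
    also have "eSuc (zero_count G1 (cball 0 r)) = zero_count G (cball 0 r)"
      unfolding Gfac[abs_def]
      by (rule zero_count_linear_factor[OF holG1 open_ball connected_ball nz(1) G1_nz cball_sub,
            symmetric]) (use a in simp)
    finally show "eSuc (zero_count H (cball 0 r)) = zero_count G (cball 0 r)" .
  next
    fix w :: complex assume w: "norm w = R"
    have "w * cnj w = of_real (R\<^sup>2)"
      using w by (metis complex_norm_square mult.commute)
    hence "of_real (R\<^sup>2) - cnj a * w = w * cnj (w - a)"
      by (simp add: algebra_simps)
    hence "norm (of_real (R\<^sup>2) - cnj a * w) = R * norm (w - a)"
      using w by (metis complex_mod_cnj norm_mult)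
    hence "norm (c w) = norm (w - a)"
      using R by (simp add: c_def norm_divide)
    thus "norm (H w) = norm (G w)" by (simp add: H_def Gfac norm_mult)
  next
    fix z :: complex assume z: "norm z \<le> r"
    have "R * norm (z - a) \<le> blaschke_bound r R * (norm (c z) * R)"
      using blaschke_factor_bound[OF r(1,2) a(1) z] R by (simp add: c_def norm_divide)
    hence "norm (z - a) \<le> blaschke_bound r R * norm (c z)"
      using R by (simp add: algebra_simps)
    hence "norm (z - a) * norm (G1 z) \<le> blaschke_bound r R * norm (c z) * norm (G1 z)"
      by (rule mult_right_mono) simp
    thus "norm (G z) \<le> blaschke_bound r R * norm (H z)"
      by (simp add: Gfac H_def norm_mult mult_ac)
  qed
qed

lemma norm_le_blaschke_power_if_zeros:
  fixes G :: "complex \<Rightarrow> complex"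
  assumes "G holomorphic_on ball 0 R1" and r: "0 \<le> r" "r < R" "R < R1"
    and "zero_count G (cball 0 r) \<ge> enat N"
    and "\<And>w. norm w = R \<Longrightarrow> norm (G w) \<le> B"
    and "norm z \<le> r"
  shows "norm (G z) \<le> blaschke_bound r R ^ N * B"
  using assms(1,5-7)
proof (induction N arbitrary: G z)
  case 0
  have "G holomorphic_on interior (cball 0 R)" "continuous_on (closure (cball 0 R)) G"
    using 0(1) r by (auto intro!: holomorphic_on_imp_continuous_on elim!: holomorphic_on_subset)
  hence "norm (G z) \<le> B"
    by (rule maximum_modulus_frontier[OF _ _ bounded_cball]) (use 0(3,4) r in auto)
  thus ?case by simp
next
  case (Suc N)
  have q: "0 \<le> blaschke_bound r R" using r by (simp add: blaschke_bound_nonneg)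
  have "0 < zero_count G (cball 0 r)"
    using Suc.prems(2) by (rule less_le_trans[rotated]) (simp add: zero_enat_def)
  then obtain a where a: "a \<in> cball 0 r" "G a = 0" by (rule zero_count_pos_imp_zero)
  show ?case
  proof (cases "\<forall>w\<in>ball 0 R1. G w = 0")
    case True
    have "0 \<le> B" using Suc.prems(3)[of "of_real R"] r by (auto intro: order_trans[OF norm_ge_zero])
    thus ?thesis using True Suc.prems(4) r q by simp
  next
    case False
    then obtain \<beta> where \<beta>: "\<beta> \<in> ball 0 R1" "G \<beta> \<noteq> 0" by auto
    obtain H where H: "H holomorphic_on ball 0 R1"
      "eSuc (zero_count H (cball 0 r)) = zero_count G (cball 0 r)"
      "\<And>w. norm w = R \<Longrightarrow> norm (H w) = norm (G w)"
      "\<And>z. norm z \<le> r \<Longrightarrow> norm (G z) \<le> blaschke_bound r R * norm (H z)"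
      using divide_blaschke_factor[OF Suc.prems(1) r _ a(2) \<beta>] a(1) by auto
    have "enat N \<le> zero_count H (cball 0 r)"
      using Suc.prems(2) unfolding H(2)[symmetric] eSuc_enat[symmetric] by simp
    hence "norm (H z) \<le> blaschke_bound r R ^ N * B"
      using Suc.IH[OF H(1)] H(3) Suc.prems(3,4) by simp
    hence "blaschke_bound r R * norm (H z) \<le> blaschke_bound r R * (blaschke_bound r R ^ N * B)"
      using q by (rule mult_left_mono)
    thus ?thesis using H(4)[OF Suc.prems(4)] by simp
  qed
qed

definition taylor_coeff :: "(complex \<Rightarrow> complex) \<Rightarrow> nat \<Rightarrow> complex" where
  "taylor_coeff f k = (deriv ^^ k) f 0 / fact k"

lemma taylor_series_sums:
  assumes "f holomorphic_on ball 0 \<rho>" "norm z < \<rho>"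
  shows "(\<lambda>k. taylor_coeff f k * z ^ k) sums f z"
  using holomorphic_power_series[OF assms(1), of z] assms(2) by (simp add: taylor_coeff_def)

lemma taylor_terms_tendsto_zero:
  assumes "f holomorphic_on ball 0 \<rho>'" "0 \<le> \<rho>" "\<rho> < \<rho>'"
  shows "(\<lambda>k. norm (taylor_coeff f k) * \<rho> ^ k) \<longlonglongrightarrow> 0"
proof -
  have "(\<lambda>k. taylor_coeff f k * of_real \<rho> ^ k) \<longlonglongrightarrow> 0"
    using taylor_series_sums[OF assms(1), of "of_real \<rho>"] assms(2,3)
    by (intro summable_LIMSEQ_zero sums_summable) auto
  hence "(\<lambda>k. norm (taylor_coeff f k * of_real \<rho> ^ k)) \<longlonglongrightarrow> 0"
    by (rule tendsto_norm_zero)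
  thus ?thesis using assms(2) by (simp add: norm_mult norm_power)
qed

lemma norm_taylor_coeff_le:
  assumes "G holomorphic_on ball 0 \<rho>" "0 < r" "r < \<rho>"
    and "\<And>z. norm z = r \<Longrightarrow> norm (G z) \<le> M"
  shows "norm (taylor_coeff G k) \<le> M / r ^ k"
proof -
  have "norm ((deriv ^^ k) G 0) \<le> fact k * M / r ^ k"
    using assms by (intro Cauchy_inequality)
      (auto intro!: holomorphic_on_imp_continuous_on elim!: holomorphic_on_subset)
  thus ?thesis by (simp add: taylor_coeff_def norm_divide field_simps)
qed

lemma poly_has_fps_expansion: "poly p has_fps_expansion fps_of_poly p"
  by (auto simp: has_fps_expansion_def)

lemma taylor_coeff_poly: "taylor_coeff (poly p) k = coeff p k"
  using fps_nth_fps_expansion[OF poly_has_fps_expansion] by (simp add: taylor_coeff_def)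

lemma norm_poly_le_on_larger_circle:
  fixes D :: "complex poly"
  assumes deg: "degree D \<le> n" and r: "0 < r" "r \<le> R"
    and M: "\<And>z. norm z = r \<Longrightarrow> norm (poly D z) \<le> M"
    and w: "norm w = R"
  shows "norm (poly D w) \<le> (real n + 1) * (R / r) ^ n * M"
proof -
  have M0: "0 \<le> M" using M[of "of_real r"] r by (auto intro: order_trans[OF norm_ge_zero])
  have "norm (poly D w) = norm (\<Sum>i\<le>degree D. coeff D i * w ^ i)" by (simp add: poly_altdef)
  also have "\<dots> \<le> (\<Sum>i\<le>degree D. norm (coeff D i) * R ^ i)"
    by (rule order_trans[OF norm_sum]) (simp add: norm_mult norm_power w)
  also have "\<dots> \<le> (\<Sum>i\<le>degree D. M * (R / r) ^ n)"
  proof (rule sum_mono)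
    fix i assume i: "i \<in> {..degree D}"
    have "norm (coeff D i) \<le> M / r ^ i"
      using norm_taylor_coeff_le[of "poly D" "r + 1" r M i] r M
      by (simp add: taylor_coeff_poly holomorphic_intros)
    hence "norm (coeff D i) * R ^ i \<le> M / r ^ i * R ^ i"
      using r by (intro mult_right_mono) auto
    also have "\<dots> = M * (R / r) ^ i" by (simp add: power_divide)
    also have "\<dots> \<le> M * (R / r) ^ n"
      using i deg r M0 by (intro mult_left_mono power_increasing) auto
    finally show "norm (coeff D i) * R ^ i \<le> M * (R / r) ^ n" .
  qed
  also have "\<dots> = (real (degree D) + 1) * (M * (R / r) ^ n)" by simp
  also have "\<dots> \<le> (real n + 1) * (M * (R / r) ^ n)"
    using deg M0 r by (intro mult_right_mono) auto
  finally show ?thesis by (simp add: mult_ac)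
qed

lemma taylor_coeff_linear_times_minus_poly:
  fixes f :: "complex \<Rightarrow> complex" and P :: "complex poly"
  assumes "f holomorphic_on ball 0 \<rho>" "0 < \<rho>" and deg: "degree P \<le> n"
  shows "taylor_coeff (\<lambda>z. (u * z - v) * f z - poly P z) (Suc n)
         = u * taylor_coeff f n - v * taylor_coeff f (Suc n)"
proof -
  have "f analytic_on {0}" using assms(1,2) analytic_at by fastforce
  hence F: "f has_fps_expansion fps_expansion f 0"
    by (rule analytic_at_imp_has_fps_expansion_0)
  have "(\<lambda>z. (u * z - v) * f z - poly P z) has_fps_expansion
          (fps_const u * fps_X - fps_const v) * fps_expansion f 0 - fps_of_poly P"
    by (intro has_fps_expansion_diff has_fps_expansion_mult has_fps_expansion_cmult_left
          has_fps_expansion_fps_X has_fps_expansion_const F poly_has_fps_expansion)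
  hence "taylor_coeff (\<lambda>z. (u * z - v) * f z - poly P z) (Suc n)
      = fps_nth ((fps_const u * fps_X - fps_const v) * fps_expansion f 0 - fps_of_poly P) (Suc n)"
    unfolding taylor_coeff_def by (rule fps_nth_fps_expansion[symmetric])
  also have "\<dots> = u * fps_nth (fps_expansion f 0) n - v * fps_nth (fps_expansion f 0) (Suc n)"
    using deg by (simp add: algebra_simps coeff_eq_0)
  finally show ?thesis by (simp only: fps_nth_fps_expansion[OF F] taylor_coeff_def)
qed

definition dominates_tail :: "(nat \<Rightarrow> complex) \<Rightarrow> real \<Rightarrow> nat \<Rightarrow> bool" where
  "dominates_tail c \<rho> n \<longleftrightarrow> (\<forall>j\<ge>n. norm (c j) * \<rho> ^ j \<le> norm (c n) * \<rho> ^ n)"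

lemma norm_power_series_tail_le:
  fixes c :: "nat \<Rightarrow> complex"
  assumes dom: "dominates_tail c \<rho> n" and z: "norm z < \<rho>"
  shows "norm (\<Sum>j. c (j + n) * z ^ (j + n)) \<le> norm (c n) * norm z ^ n / (1 - norm z / \<rho>)"
proof -
  define t where "t = norm z / \<rho>"
  have \<rho>: "0 < \<rho>" using z by (meson le_less_trans norm_ge_zero)
  have t: "0 \<le> t" "t < 1" using z \<rho> by (auto simp: t_def)
  have term_le: "norm (c (j + n) * z ^ (j + n)) \<le> norm (c n) * norm z ^ n * t ^ j" for j
  proof -
    have "norm (c (j + n) * z ^ (j + n)) = (norm (c (j + n)) * \<rho> ^ (j + n)) * t ^ (j + n)"
      using \<rho> by (simp add: t_def norm_mult norm_power power_divide)
    also have "\<dots> \<le> (norm (c n) * \<rho> ^ n) * t ^ (j + n)"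
      using dom t by (intro mult_right_mono) (auto simp: dominates_tail_def)
    also have "\<dots> = norm (c n) * norm z ^ n * t ^ j"
      using \<rho> by (simp add: t_def power_add power_divide)
    finally show ?thesis .
  qed
  have "summable (\<lambda>j. norm (c n) * norm z ^ n * t ^ j)"
    using t by (intro summable_mult summable_geometric) auto
  hence "norm (\<Sum>j. c (j + n) * z ^ (j + n)) \<le> (\<Sum>j. norm (c n) * norm z ^ n * t ^ j)"
    by (rule norm_suminf_le[OF term_le])
  also have "\<dots> = norm (c n) * norm z ^ n / (1 - t)"
    using t by (simp add: suminf_mult suminf_geometric divide_inverse)
  finally show ?thesis by (simp add: t_def)
qed

lemma taylor_remainder_bound:
  assumes hol: "f holomorphic_on ball 0 R1" and dom: "dominates_tail (taylor_coeff f) \<rho> n"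
    and R: "R < \<rho>" "R < R1" and z: "norm z \<le> R"
  shows "norm (f z - (\<Sum>k<n. taylor_coeff f k * z ^ k))
         \<le> norm (taylor_coeff f n) * norm z ^ n / (1 - R / \<rho>)"
proof -
  have \<rho>: "0 < \<rho>" using z R norm_ge_zero[of z] by linarith
  have sums: "(\<lambda>k. taylor_coeff f k * z ^ k) sums f z"
    using taylor_series_sums[OF hol] z R by simp
  hence "f z = (\<Sum>k. taylor_coeff f k * z ^ k)" by (simp add: sums_iff)
  also have "\<dots> = (\<Sum>j. taylor_coeff f (j + n) * z ^ (j + n)) + (\<Sum>k<n. taylor_coeff f k * z ^ k)"
    by (rule suminf_split_initial_segment[OF sums_summable[OF sums]])
  finally have "f z - (\<Sum>k<n. taylor_coeff f k * z ^ k) = (\<Sum>j. taylor_coeff f (j + n) * z ^ (j + n))"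
    by simp
  also have "norm \<dots> \<le> norm (taylor_coeff f n) * norm z ^ n / (1 - norm z / \<rho>)"
    using dom z R by (intro norm_power_series_tail_le) auto
  also have "\<dots> \<le> norm (taylor_coeff f n) * norm z ^ n / (1 - R / \<rho>)"
    using z R \<rho>
    by (intro divide_left_mono mult_pos_pos diff_left_mono divide_right_mono)
      (auto simp: divide_less_eq_1)
  finally show ?thesis .
qed

lemma norm_le_if_near_poly_with_many_zeros:
  fixes G :: "complex \<Rightarrow> complex" and D :: "complex poly"
  assumes hol: "G holomorphic_on ball 0 R1" and r: "0 < r" "r < R" "R < R1"
    and deg: "degree D \<le> n"
    and approx: "\<And>z. norm z \<le> R \<Longrightarrow> norm (G z - poly D z) \<le> A * norm z ^ n"
    and zeros: "zero_count G (cball 0 r) \<ge> enat K"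
    and small: "blaschke_bound r R ^ K * (real n + 1) * (R / r) ^ n \<le> 1/2"
    and z: "norm z = r"
  shows "norm (G z) \<le> 2 * (real n + 2) * blaschke_bound r R ^ K * A * R ^ n"
proof -
  define q where "q = blaschke_bound r R ^ K"
  have q: "0 \<le> q" using r by (simp add: q_def blaschke_bound_nonneg)
  have "continuous_on (sphere 0 r) (\<lambda>y. norm (G y))"
    using hol r by (intro continuous_on_norm holomorphic_on_imp_continuous_on)
      (auto elim!: holomorphic_on_subset)
  hence "\<exists>z0\<in>sphere 0 r. \<forall>y\<in>sphere 0 r. norm (G y) \<le> norm (G z0)"
    using r by (intro continuous_attains_sup) auto
  then obtain z0 where z0: "norm z0 = r" "\<And>y. norm y = r \<Longrightarrow> norm (G y) \<le> norm (G z0)"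
    by auto
  define M where "M = norm (G z0)"
  have "norm (poly D w) \<le> M + A * r ^ n" if "norm w = r" for w
    using norm_triangle_ineq4[of "G w" "G w - poly D w"] z0(2)[OF that] approx[of w] that r
    by (simp add: M_def)
  hence "norm (poly D w) \<le> (real n + 1) * (R / r) ^ n * (M + A * r ^ n)" if "norm w = R" for w
    using norm_poly_le_on_larger_circle[OF deg r(1) _ _ that] r by simp
  hence "norm (G w) \<le> A * R ^ n + (real n + 1) * (R / r) ^ n * (M + A * r ^ n)"
    if "norm w = R" for w
    using norm_triangle_ineq[of "G w - poly D w" "poly D w"] approx[of w] that by force
  hence "M \<le> q * (A * R ^ n + (real n + 1) * (R / r) ^ n * (M + A * r ^ n))"
    unfolding M_def q_def using norm_le_blaschke_power_if_zeros[OF hol _ r(2,3) zeros] r z0(1)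
    by simp
  also have "\<dots> = (real n + 2) * q * A * R ^ n + (q * (real n + 1) * (R / r) ^ n) * M"
    using r by (simp add: field_simps power_divide)
  also have "\<dots> \<le> (real n + 2) * q * A * R ^ n + M / 2"
    using small mult_right_mono[OF small, of M] by (simp add: q_def M_def)
  finally have "M \<le> 2 * ((real n + 2) * q * A * R ^ n)" by linarith
  hence "M \<le> 2 * (real n + 2) * q * A * R ^ n" by (simp only: mult.assoc)
  thus ?thesis using z0(2)[OF z] unfolding M_def q_def by linarith
qed

lemma degree_taylor_poly_times_linear_minus:
  fixes c :: "nat \<Rightarrow> 'a::comm_ring"
  assumes "degree P \<le> n"
  shows "degree ([:-v, u:] * (\<Sum>k<n. monom (c k) k) - P) \<le> n"
proof (cases n)
  case (Suc m)
  have "degree (\<Sum>k<n. monom (c k) k) \<le> m"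
    using Suc by (intro degree_sum_le) (auto intro: order_trans[OF degree_monom_le])
  moreover have "degree [:-v, u:] \<le> 1" by (rule order_trans[OF degree_pCons_le]) simp
  ultimately have "degree ([:-v, u:] * (\<Sum>k<n. monom (c k) k)) \<le> n"
    using degree_mult_le[of "[:-v, u:]" "\<Sum>k<n. monom (c k) k"] Suc by linarith
  thus ?thesis using assms by (intro degree_diff_le)
qed (use assms in simp)

lemma norm_diff_ge_if_dominates_tail:
  fixes c :: "nat \<Rightarrow> complex"
  assumes dom: "dominates_tail c \<rho> n" and \<rho>: "0 < \<rho>" and \<delta>: "0 \<le> \<delta>"
    and v: "norm v \<le> \<delta> * norm u"
  shows "norm u * norm (c n) * (1 - \<delta> / \<rho>) \<le> norm (u * c n - v * c (Suc n))"
proof -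
  have "(norm (c (Suc n)) * \<rho>) * \<rho> ^ n \<le> norm (c n) * \<rho> ^ n"
    using spec[OF dom[unfolded dominates_tail_def], of "Suc n"] by (simp add: mult_ac)
  hence "norm (c (Suc n)) * \<rho> \<le> norm (c n)"
    using \<rho> by simp
  hence "\<delta> * norm u * (norm (c (Suc n)) * \<rho>) \<le> \<delta> * norm u * norm (c n)"
    using \<delta> by (intro mult_left_mono) auto
  with mult_right_mono[OF v, of "norm (c (Suc n)) * \<rho>"] \<rho>
  have "norm v * (norm (c (Suc n)) * \<rho>) \<le> \<delta> * norm u * norm (c n)"
    by (meson order_trans mult_nonneg_nonneg norm_ge_zero less_imp_le)
  hence "norm v * norm (c (Suc n)) \<le> norm u * norm (c n) * \<delta> / \<rho>"
    using \<rho> by (simp add: field_simps)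
  thus ?thesis
    using norm_triangle_ineq2[of "u * c n" "v * c (Suc n)"] by (simp add: norm_mult algebra_simps)
qed

lemma dominant_coeff_estimate:
  fixes f :: "complex \<Rightarrow> complex" and P :: "complex poly"
  assumes hol: "f holomorphic_on ball 0 R1" and rad: "0 < r" "r < R" "R < \<rho>" "\<rho> < R1"
    and dom: "dominates_tail (taylor_coeff f) \<rho> n" and fn: "taylor_coeff f n \<noteq> 0"
    and \<delta>: "0 \<le> \<delta>" and uv: "u \<noteq> 0" "norm v \<le> \<delta> * norm u"
    and deg: "degree P \<le> n"
    and zeros: "zero_count (\<lambda>z. (u * z - v) * f z - poly P z) (cball 0 r) \<ge> enat K"
    and small: "blaschke_bound r R ^ K * (real n + 1) * (R / r) ^ n \<le> 1/2"
  shows "(1 - \<delta> / \<rho>) * r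
         \<le> 2 * (R + \<delta>) / (1 - R / \<rho>) * (blaschke_bound r R ^ K * (real n + 2) * (R / r) ^ n)"
proof -
  define c where "c = taylor_coeff f"
  define G where "G = (\<lambda>z. (u * z - v) * f z - poly P z)"
  define D where "D = [:-v, u:] * (\<Sum>k<n. monom (c k) k) - P"
  define W where "W = norm u * norm (c n)"
  define A where "A = W * (R + \<delta>) / (1 - R / \<rho>)"
  define q where "q = blaschke_bound r R ^ K"
  have W: "0 < W" using uv(1) fn by (simp add: W_def c_def)
  have \<rho>: "0 < \<rho>" "0 < 1 - R / \<rho>" using rad by auto
  have degD: "degree D \<le> n"
    unfolding D_def by (rule degree_taylor_poly_times_linear_minus[OF deg])
  have holG: "G holomorphic_on ball 0 R1" unfolding G_def by (intro holomorphic_intros hol)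
  have approx: "norm (G z - poly D z) \<le> A * norm z ^ n" if z: "norm z \<le> R" for z
  proof -
    have "norm (u * z - v) \<le> norm u * (R + \<delta>)"
      using norm_triangle_ineq4[of "u * z" v] mult_left_mono[OF z norm_ge_zero[of u]] uv(2)
      by (simp add: norm_mult algebra_simps)
    moreover have "norm (f z - (\<Sum>k<n. c k * z ^ k)) \<le> norm (c n) * norm z ^ n / (1 - R / \<rho>)"
      unfolding c_def using rad by (intro taylor_remainder_bound[OF hol dom]) (use z in auto)
    ultimately have "norm (u * z - v) * norm (f z - (\<Sum>k<n. c k * z ^ k))
        \<le> norm u * (R + \<delta>) * (norm (c n) * norm z ^ n / (1 - R / \<rho>))"
      using rad \<delta> by (intro mult_mono) auto
    moreover have "G z - poly D z = (u * z - v) * (f z - (\<Sum>k<n. c k * z ^ k))"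
      by (simp add: G_def D_def poly_sum poly_monom algebra_simps)
    ultimately show ?thesis by (simp add: A_def W_def norm_mult mult_ac)
  qed
  have "norm (G z) \<le> 2 * (real n + 2) * q * A * R ^ n" if "norm z = r" for z
    unfolding q_def
    by (rule norm_le_if_near_poly_with_many_zeros[OF holG rad(1,2) _ degD approx _ small that])
      (use rad zeros in \<open>auto simp: G_def\<close>)
  hence "norm (taylor_coeff G (Suc n)) \<le> 2 * (real n + 2) * q * A * R ^ n / r ^ Suc n"
    using rad by (intro norm_taylor_coeff_le[OF holG]) auto
  also have "taylor_coeff G (Suc n) = u * c n - v * c (Suc n)"
    unfolding G_def c_def using rad
    by (intro taylor_coeff_linear_times_minus_poly[OF hol _ deg]) auto
  finally have upper:
    "norm (u * c n - v * c (Suc n)) \<le> 2 * (real n + 2) * q * A * R ^ n / r ^ Suc n" .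
  have "W * (1 - \<delta> / \<rho>) \<le> norm (u * c n - v * c (Suc n))"
    unfolding W_def c_def by (rule norm_diff_ge_if_dominates_tail[OF dom \<rho>(1) \<delta> uv(2)])
  also note upper
  also have "2 * (real n + 2) * q * A * R ^ n / r ^ Suc n
      = W * (2 * (R + \<delta>) / (1 - R / \<rho>) * (q * (real n + 2) * (R / r) ^ n)) / r"
    using rad by (simp add: A_def power_divide field_simps)
  finally have "W * ((1 - \<delta> / \<rho>) * r)
      \<le> W * (2 * (R + \<delta>) / (1 - R / \<rho>) * (q * (real n + 2) * (R / r) ^ n))"
    using rad by (simp add: field_simps)
  thus ?thesis unfolding q_def using W by (rule mult_left_le_imp_le)
qed

lemma exists_dominant_index:
  fixes c :: "nat \<Rightarrow> complex"
  assumes lim: "(\<lambda>k. norm (c k) * \<rho> ^ k) \<longlonglongrightarrow> 0" and \<rho>: "0 < \<rho>"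
    and nonzero: "\<exists>j\<ge>m. c j \<noteq> 0"
  obtains n where "n \<ge> m" "c n \<noteq> 0" "dominates_tail c \<rho> n"
proof -
  define b where "b = (\<lambda>k. norm (c k) * \<rho> ^ k)"
  obtain j where j: "j \<ge> m" "c j \<noteq> 0" using nonzero by blast
  have "0 < b j" using j \<rho> by (simp add: b_def)
  with lim have "eventually (\<lambda>k. b k < b j) sequentially"
    unfolding b_def by (rule order_tendstoD(2))
  then obtain K where K: "\<And>k. k \<ge> K \<Longrightarrow> b k < b j"
    by (auto simp: eventually_sequentially)
  define T where "T = {m..max K j}"
  have T: "finite T" "j \<in> T" using j by (auto simp: T_def)
  have "Max (b ` T) \<in> b ` T" using T by (intro Max_in) auto
  then obtain n where "n \<in> T" "b n = Max (b ` T)" by auto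
  hence n: "n \<in> T" "\<And>k. k \<in> T \<Longrightarrow> b k \<le> b n" using T(1) by auto
  have "b j \<le> b n" using n T by blast
  have "b k \<le> b n" if "k \<ge> n" for k
  proof (cases "k \<le> max K j")
    case True
    thus ?thesis using n that by (auto simp: T_def)
  next
    case False
    hence "b k < b j" by (intro K) simp
    thus ?thesis using \<open>b j \<le> b n\<close> by simp
  qed
  moreover have "c n \<noteq> 0" using \<open>b j \<le> b n\<close> \<open>0 < b j\<close> by (auto simp: b_def)
  ultimately show ?thesis
    using that n(1) by (auto simp: T_def dominates_tail_def b_def)
qed

lemma power_superlinear_tendsto_zero:
  fixes q K :: real and N :: "nat \<Rightarrow> int"
  assumes q: "0 \<le> q" "q < 1" and K: "0 < K"
    and N: "filterlim (\<lambda>n. real_of_int (N n) / real n) at_top sequentially"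
  shows "(\<lambda>n. q ^ nat (N n) * (real n + 2) * K ^ n) \<longlonglongrightarrow> 0"
proof -
  have "(\<lambda>c. q ^ c) \<longlonglongrightarrow> 0" using q by (intro LIMSEQ_power_zero) auto
  hence "eventually (\<lambda>c. q ^ c < 1 / (2 * K)) sequentially"
    using K by (intro order_tendstoD) auto
  then obtain c where c: "q ^ c < 1 / (2 * K)" by (auto simp: eventually_sequentially)
  have qc: "q ^ c * K \<le> 1/2" using c K by (simp add: field_simps)
  have "eventually (\<lambda>n. real_of_int (N n) / real n \<ge> real c) sequentially"
    using N by (simp add: filterlim_at_top)
  hence upper: "eventually (\<lambda>n. q ^ nat (N n) * (real n + 2) * K ^ n \<le> (real n + 2) * (1/2) ^ n)
    sequentially"
    using eventually_gt_at_top[of 0]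
  proof eventually_elim
    case (elim n)
    hence "real_of_int (int (c * n)) \<le> real_of_int (N n)" by (simp add: field_simps)
    hence "c * n \<le> nat (N n)" by linarith
    hence "q ^ nat (N n) * K ^ n \<le> q ^ (c * n) * K ^ n"
      using q K by (intro mult_right_mono power_decreasing) auto
    also have "\<dots> = (q ^ c * K) ^ n" by (simp add: power_mult power_mult_distrib)
    also have "\<dots> \<le> (1/2) ^ n"
      using qc q K by (intro power_mono) auto
    finally show ?case by (simp add: mult_ac)
  qed
  have lower: "eventually (\<lambda>n. 0 \<le> q ^ nat (N n) * (real n + 2) * K ^ n) sequentially"
    using q K by (intro always_eventually allI) auto
  have "(\<lambda>n. (real n + 2) * (1/2::real) ^ n) \<longlonglongrightarrow> 0" by real_asymp
  thus ?thesis by (rule tendsto_sandwich[OF lower upper tendsto_const])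
qed

lemma taylor_coeffs_eventually_zero:
  fixes f :: "complex \<Rightarrow> complex" and N :: "nat \<Rightarrow> int" and P :: "nat \<Rightarrow> complex poly"
  assumes hol: "f holomorphic_on ball 0 \<rho>'" and rad: "0 < r" "r < \<rho>" "\<rho> < \<rho>'" "0 \<le> \<delta>" "\<delta> < \<rho>"
    and N: "filterlim (\<lambda>n. real_of_int (N n) / real n) at_top sequentially"
    and deg: "\<And>n. degree (P n) \<le> n"
    and approx: "eventually (\<lambda>n. \<exists>u v. u \<noteq> 0 \<and> norm v \<le> \<delta> * norm u \<and>
        zero_count (\<lambda>z. (u * z - v) * f z - poly (P n) z) (cball 0 r) \<ge> enat (nat (N n)))
      sequentially"
  shows "\<exists>J. \<forall>k\<ge>J. taylor_coeff f k = 0"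
proof (rule ccontr)
  assume "\<not> ?thesis"
  hence nonzero: "\<exists>j\<ge>m. taylor_coeff f j \<noteq> 0" for m by auto
  define R where "R = (r + \<rho>) / 2"
  define q where "q = blaschke_bound r R"
  define e where "e = (\<lambda>n. q ^ nat (N n) * (real n + 2) * (R / r) ^ n)"
  define C where "C = 2 * (R + \<delta>) / (1 - R / \<rho>)"
  define L where "L = (1 - \<delta> / \<rho>) * r"
  have R: "r < R" "R < \<rho>" using rad by (auto simp: R_def)
  have "R / \<rho> < 1" "\<delta> / \<rho> < 1" using rad R by simp_all
  hence CL: "0 < C" "0 < L" using rad R by (simp_all add: C_def L_def)
  have q: "0 \<le> q" "q < 1"
    using rad R by (auto simp: q_def blaschke_bound_nonneg blaschke_bound_less_1)
  have "0 < R / r" using rad R by simp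
  hence "e \<longlonglongrightarrow> 0"
    unfolding e_def by (rule power_superlinear_tendsto_zero[OF q _ N])
  hence "eventually (\<lambda>n. e n < min (1/2) (L / C)) sequentially"
    using CL by (intro order_tendstoD) auto
  from eventually_conj[OF this approx] obtain m where m: "\<And>n. n \<ge> m \<Longrightarrow>
      e n < min (1/2) (L / C) \<and> (\<exists>u v. u \<noteq> 0 \<and> norm v \<le> \<delta> * norm u \<and>
        zero_count (\<lambda>z. (u * z - v) * f z - poly (P n) z) (cball 0 r) \<ge> enat (nat (N n)))"
    unfolding eventually_sequentially by blast
  have "(\<lambda>k. norm (taylor_coeff f k) * \<rho> ^ k) \<longlonglongrightarrow> 0"
    using rad by (intro taylor_terms_tendsto_zero[OF hol]) auto
  moreover have "0 < \<rho>" using rad by simp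
  ultimately obtain n where n: "n \<ge> m" "taylor_coeff f n \<noteq> 0" "dominates_tail (taylor_coeff f) \<rho> n"
    using exists_dominant_index nonzero by blast
  obtain u v where uv: "u \<noteq> 0" "norm v \<le> \<delta> * norm u"
    "zero_count (\<lambda>z. (u * z - v) * f z - poly (P n) z) (cball 0 r) \<ge> enat (nat (N n))"
    using m[OF n(1)] by blast
  have "q ^ nat (N n) * (real n + 1) * (R / r) ^ n \<le> e n"
    unfolding e_def using q rad R by (intro mult_right_mono mult_left_mono) auto
  hence small: "q ^ nat (N n) * (real n + 1) * (R / r) ^ n \<le> 1/2"
    using m[OF n(1)] by simp
  have "L \<le> C * e n"
    unfolding L_def C_def e_def q_def
    by (rule dominant_coeff_estimate[OF hol rad(1) R rad(3) n(3,2) rad(4) uv(1,2) deg uv(3)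
          small[unfolded q_def]])
  moreover have "C * e n < L" using m[OF n(1)] CL by (simp add: field_simps)
  ultimately show False by simp
qed

lemma ball_subset_disk: "ereal t \<le> s \<Longrightarrow> ball 0 t \<subseteq> disk s"
  unfolding disk_def by (auto intro: less_le_trans[of _ "ereal t"])

lemma holomorphic_on_disk_eq_poly:
  assumes hol: "f holomorphic_on disk s" and zero: "\<And>k. k \<ge> J \<Longrightarrow> taylor_coeff f k = 0"
  shows "\<forall>z\<in>disk s. f z = poly (\<Sum>k<J. monom (taylor_coeff f k) k) z"
proof
  fix z assume "z \<in> disk s"
  hence "ereal (norm z) < s" by (simp add: disk_def)
  then obtain t where t: "ereal (norm z) < ereal t" "ereal t < s" using ereal_dense2 by blast
  have "f holomorphic_on ball 0 t"
    by (rule holomorphic_on_subset[OF hol ball_subset_disk]) (use t(2) in simp)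
  hence "(\<lambda>k. taylor_coeff f k * z ^ k) sums f z"
    using taylor_series_sums t(1) by simp
  moreover have "(\<lambda>k. taylor_coeff f k * z ^ k) sums (\<Sum>k<J. taylor_coeff f k * z ^ k)"
    by (rule sums_finite) (auto simp: zero)
  ultimately have "f z = (\<Sum>k<J. taylor_coeff f k * z ^ k)"
    by (rule sums_unique2)
  thus "f z = poly (\<Sum>k<J. monom (taylor_coeff f k) k) z"
    by (simp add: poly_sum poly_monom)
qed

lemma Qnorm_eq_linear:
  assumes "ereal a < abs_alpha \<alpha>" "0 < a"
  obtains u v where "u \<noteq> 0" "norm v \<le> 1 / a * norm u" "\<And>z. Qnorm \<alpha> z = u * z - v"
proof (cases \<alpha>)
  case None
  thus ?thesis using that[of 1 0] assms by simp
next
  case (Some c)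
  hence "a < norm c" using assms by simp
  hence "c \<noteq> 0" "norm (1::complex) \<le> 1 / a * norm c" using assms by (auto simp: field_simps)
  thus ?thesis using that[of c 1] Some by simp
qed

lemma one_divide_ereal_less_swap:
  assumes "0 < s" "0 < a" "1 / s < ereal a"
  shows "ereal (1 / a) < s"
proof (cases s)
  case (real x)
  hence "1 / x < a" using assms by (simp add: one_ereal_def)
  thus ?thesis using real assms by (simp add: field_simps)
qed (use assms in auto)

theorem lemma3p2:
  fixes f :: "complex \<Rightarrow> complex" and r :: real and s :: ereal
    and N :: "nat \<Rightarrow> int" and P :: "nat \<Rightarrow> complex poly"
    and \<alpha> :: "nat \<Rightarrow> complex option"
  assumes hol1: "f holomorphic_on ball 0 1"
    and r: "0 < r" "r < 1"
    and Nmono: "strict_mono N"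
    and Nlim: "filterlim (\<lambda>n. real_of_int (N n) / real n) at_top sequentially"
    and Pdeg: "\<And>n. degree (P n) \<le> n"
    and zeros: "\<And>n. zero_count (\<lambda>z. Qnorm (\<alpha> n) z * f z - poly (P n) z) (cball 0 r)
                       \<ge> enat (nat (N n))"
    and s: "1 \<le> s"
    and hols: "f holomorphic_on disk s"
    and liminf: "liminf (\<lambda>n. abs_alpha (\<alpha> n)) > 1 / s"
  shows "\<exists>p :: complex poly. \<forall>z\<in>disk s. f z = poly p z"
proof -
  obtain a where a: "1 / s < ereal a" "ereal a < liminf (\<lambda>n. abs_alpha (\<alpha> n))"
    using ereal_dense2[OF liminf] by blast
  have s0: "0 < s" using s by (rule less_le_trans[rotated]) simp
  hence "0 \<le> 1 / s" by (simp add: divide_ereal_def inverse_ereal_ge0I)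
  hence a0: "0 < a" using a(1) by (metis ereal_less(2) le_less_trans)
  have "ereal r < s" using less_le_trans[OF _ s, of "ereal r"] r by simp
  hence "ereal (max (1 / a) r) < s"
    using one_divide_ereal_less_swap[OF s0 a0 a(1)] by (auto simp: max_def)
  then obtain \<rho>' where \<rho>': "ereal (max (1 / a) r) < ereal \<rho>'" "ereal \<rho>' < s"
    using ereal_dense2 by blast
  have approx: "eventually (\<lambda>n. \<exists>u v. u \<noteq> 0 \<and> norm v \<le> 1 / a * norm u \<and>
      zero_count (\<lambda>z. (u * z - v) * f z - poly (P n) z) (cball 0 r) \<ge> enat (nat (N n)))
    sequentially"
    using less_LiminfD[OF a(2)]
  proof eventually_elim
    case (elim n)
    then obtain u v where "u \<noteq> 0" "norm v \<le> 1 / a * norm u" "\<And>z. Qnorm (\<alpha> n) z = u * z - v"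
      using Qnorm_eq_linear a0 by metis
    thus ?case using zeros[of n] by auto
  qed
  have "f holomorphic_on ball 0 \<rho>'"
    by (rule holomorphic_on_subset[OF hols ball_subset_disk]) (use \<rho>' in simp)
  hence "\<exists>J. \<forall>k\<ge>J. taylor_coeff f k = 0"
    by (rule taylor_coeffs_eventually_zero[where \<rho> = "(max (1 / a) r + \<rho>') / 2",
          OF _ _ _ _ _ _ Nlim Pdeg approx]) (use \<rho>' r a0 in auto)
  thus ?thesis using holomorphic_on_disk_eq_poly[OF hols] by blast
qed

end
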